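(* Let $n\ge2$ and let $\xi_n:S^1\to M_n(\mathbb C)$ be the continuous function whose $(i,j)$ entry ($1\le i,j\le n$) is $\xi_n(z)_{ij}=z^{j-i}$. Then $\xi_n$ is a positive element of $C(S^1)^{(n)}\otimes_{\min}C(S^1)$ which is entangled: there do not exist $k\in\mathbb N$, positive semidefinite Toeplitz matrices $t_1,\dots,t_k\in C(S^1)^{(n)}$ and positive functions $f_1,\dots,f_k\in C(S^1)$ with $\xi_n=\sum_{j=1}^k t_j\otimes f_j$.
   Context: $S^1$ is the unit circle, $C(S^1)$ the C$^*$-algebra of continuous complex functions on it. $C(S^1)^{(n)}\subseteq M_n(\mathbb C)$ is the operator system of Toeplitz matrices $[\tau_{k-\ell}]$. $C(S^1)^{(n)}\otimes_{\min}C(S^1)$ is identified with the continuous functions $S^1\to C(S^1)^{(n)}$, with $t\otimes f$ corresponding to $z\mapsto f(z)t$, and an element is positive iff its value at each $z\in S^1$ is positive semidefinite. A positive element is separable if it is a finite sum of tensors of positive elements, and entangled otherwise. *)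

theory Defs
  imports "HOL-Analysis.Analysis"
begin

text \<open>n x n complex matrices are represented as functions nat => nat => complex,
  with entries read only for indices 0 <= i, j < n (0-based indexing;
  the entry (i,j) of the paper corresponds to (i-1,j-1) here).\<close>

type_synonym cmat = "nat \<Rightarrow> nat \<Rightarrow> complex"

abbreviation S1 :: "complex set" where "S1 \<equiv> sphere 0 1"

text \<open>Toeplitz matrices [tau_(k-l)]: membership in C(S^1)^(n).\<close>
definition toeplitz :: "nat \<Rightarrow> cmat \<Rightarrow> bool" where
  "toeplitz n t \<longleftrightarrow> (\<exists>\<tau> :: int \<Rightarrow> complex. \<forall>k<n. \<forall>l<n. t k l = \<tau> (int k - int l))"

definition psd :: "nat \<Rightarrow> cmat \<Rightarrow> bool" where
  "psd n t \<longleftrightarrow> (\<forall>v :: nat \<Rightarrow> complex.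
     let q = (\<Sum>i<n. \<Sum>j<n. cnj (v i) * t i j * v j) in Im q = 0 \<and> Re q \<ge> 0)"

definition pos_toeplitz :: "nat \<Rightarrow> cmat \<Rightarrow> bool" where
  "pos_toeplitz n t \<longleftrightarrow> toeplitz n t \<and> psd n t"

definition pos_fun :: "(complex \<Rightarrow> complex) \<Rightarrow> bool" where
  "pos_fun f \<longleftrightarrow> continuous_on S1 f \<and> (\<forall>z\<in>S1. Im (f z) = 0 \<and> Re (f z) \<ge> 0)"

text \<open>Elements of C(S^1)^(n) (x)_min C(S^1), viewed as continuous functions S^1 -> C(S^1)^(n).\<close>
definition in_tensor :: "nat \<Rightarrow> (complex \<Rightarrow> cmat) \<Rightarrow> bool" where
  "in_tensor n F \<longleftrightarrow> (\<forall>i<n. \<forall>j<n. continuous_on S1 (\<lambda>z. F z i j)) \<and> (\<forall>z\<in>S1. toeplitz n (F z))"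

definition pos_tensor :: "nat \<Rightarrow> (complex \<Rightarrow> cmat) \<Rightarrow> bool" where
  "pos_tensor n F \<longleftrightarrow> in_tensor n F \<and> (\<forall>z\<in>S1. psd n (F z))"

text \<open>Separable: a finite sum of tensors t_j (x) f_j of positive elements, where
  t (x) f corresponds to z |-> f(z) t; equality as functions on S^1.\<close>
definition separable :: "nat \<Rightarrow> (complex \<Rightarrow> cmat) \<Rightarrow> bool" where
  "separable n F \<longleftrightarrow> (\<exists>(k::nat) (t :: nat \<Rightarrow> cmat) (f :: nat \<Rightarrow> complex \<Rightarrow> complex).
     (\<forall>j<k. pos_toeplitz n (t j) \<and> pos_fun (f j)) \<and>
     (\<forall>z\<in>S1. \<forall>a<n. \<forall>b<n. F z a b = (\<Sum>j<k. f j z * t j a b)))"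

definition entangled :: "nat \<Rightarrow> (complex \<Rightarrow> cmat) \<Rightarrow> bool" where
  "entangled n F \<longleftrightarrow> pos_tensor n F \<and> \<not> separable n F"

definition xi :: "complex \<Rightarrow> cmat" where
  "xi z i j = z powi (int j - int i)"

end

theory Submission
  imports Defs "HOL-Computational_Algebra.Polynomial" "HOL-Library.Complex_Order"
begin

text \<open>At every \<open>z\<close> on the circle, \<open>xi z\<close> is the rank-one matrix \<open>u u\<^sup>*\<close> with \<open>u = (z\<^sup>j)\<^sub>j\<close>, hence
  positive, and it annihilates \<open>v = (1, -z\<^sup>*, 0, \<dots>)\<close>. In a separable decomposition
  \<open>xi = \<Sum>\<^sub>j t\<^sub>j \<otimes> f\<^sub>j\<close> the numbers \<open>f\<^sub>j(z) \<langle>t\<^sub>j v, v\<rangle>\<close> are nonnegative and sum to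
  \<open>\<langle>xi(z) v, v\<rangle> = 0\<close>, so they all vanish. Some \<open>j\<close> has \<open>f\<^sub>j(1) (t\<^sub>j)\<^sub>0\<^sub>0 \<noteq> 0\<close>; by continuity
  \<open>f\<^sub>j\<close> is nonzero on infinitely many points of the circle, where therefore
  \<open>\<langle>t\<^sub>j v, v\<rangle> = 0\<close>. Since \<open>z\<^sup>* = 1/z\<close> there and \<open>t\<^sub>j\<close> is Toeplitz, \<open>z \<langle>t\<^sub>j v, v\<rangle>\<close> is a
  quadratic polynomial in \<open>z\<close> with middle coefficient \<open>2 (t\<^sub>j)\<^sub>0\<^sub>0\<close>; having infinitely many
  roots it is zero, a contradiction.\<close>

definition qform :: "nat \<Rightarrow> cmat \<Rightarrow> (nat \<Rightarrow> complex) \<Rightarrow> complex" where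
  "qform n t v = (\<Sum>i<n. \<Sum>j<n. cnj (v i) * t i j * v j)"

lemma psd_iff_qform_nonneg: "psd n t \<longleftrightarrow> (\<forall>v. 0 \<le> qform n t v)"
  by (auto simp: psd_def qform_def Let_def less_eq_complex_def)

lemma qform_cong:
  "(\<And>i j. i < n \<Longrightarrow> j < n \<Longrightarrow> t i j = t' i j) \<Longrightarrow> qform n t v = qform n t' v"
  by (simp add: qform_def)

lemma qform_sum:
  "qform n (\<lambda>i j. \<Sum>m\<in>K. c m * t m i j) v = (\<Sum>m\<in>K. c m * qform n (t m) v)"
  unfolding qform_def sum_distrib_left sum_distrib_right
  by (subst sum.swap, rule sum.cong[OF refl], subst sum.swap) (simp add: mult_ac)

lemma qform_rank_one:
  "qform n (\<lambda>i j. cnj (u i) * u j) v = of_real ((cmod (\<Sum>j<n. u j * v j))\<^sup>2)"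
proof -
  let ?s = "\<Sum>j<n. u j * v j"
  have "qform n (\<lambda>i j. cnj (u i) * u j) v = cnj ?s * ?s"
    unfolding qform_def cnj_sum sum_product by (simp add: mult_ac)
  also have "\<dots> = of_real ((cmod ?s)\<^sup>2)"
    by (metis complex_norm_square mult.commute of_real_power)
  finally show ?thesis .
qed

lemma sum_lessThan_supported_0_1:
  fixes g :: "nat \<Rightarrow> 'a::comm_monoid_add"
  assumes "n \<ge> 2" "\<And>i. i \<ge> 2 \<Longrightarrow> g i = 0"
  shows "(\<Sum>i<n. g i) = g 0 + g 1"
proof -
  have "(\<Sum>i<n. g i) = (\<Sum>i\<in>{0,1}. g i)"
    by (rule sum.mono_neutral_right) (use assms in auto)
  then show ?thesis by simp
qed

definition perp_vec :: "complex \<Rightarrow> nat \<Rightarrow> complex" where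
  "perp_vec w i = (if i = 0 then 1 else if i = 1 then - cnj w else 0)"

lemma qform_perp_vec:
  assumes "n \<ge> 2"
  shows "qform n t (perp_vec w) = t 0 0 - t 0 1 * cnj w - w * t 1 0 + w * cnj w * t 1 1"
  using assms
  by (simp add: qform_def sum_lessThan_supported_0_1 perp_vec_def algebra_simps)

lemma S1_mult_cnj: "z \<in> S1 \<Longrightarrow> z * cnj z = 1"
  by (metis complex_norm_square mem_sphere_0 of_real_1 power_one)

lemma xi_eq_rank_one:
  assumes "z \<in> S1"
  shows "xi z i j = cnj (z ^ i) * z ^ j"
proof -
  have "z \<noteq> 0" using assms by auto
  moreover have "cnj z = inverse z"
    using S1_mult_cnj[OF assms] \<open>z \<noteq> 0\<close> by (simp add: field_simps)
  ultimately show ?thesis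
    by (simp add: xi_def power_int_diff divide_inverse power_inverse mult.commute)
qed

lemma qform_xi:
  assumes "z \<in> S1"
  shows "qform n (xi z) v = of_real ((cmod (\<Sum>j<n. z ^ j * v j))\<^sup>2)"
proof -
  have "qform n (xi z) v = qform n (\<lambda>i j. cnj (z ^ i) * z ^ j) v"
    using assms by (intro qform_cong) (simp add: xi_eq_rank_one)
  also have "\<dots> = of_real ((cmod (\<Sum>j<n. z ^ j * v j))\<^sup>2)"
    by (rule qform_rank_one)
  finally show ?thesis .
qed

lemma pos_tensor_xi: "pos_tensor n xi"
proof -
  have "continuous_on S1 (\<lambda>z. xi z i j)" for i j
    unfolding xi_def by (intro continuous_intros) auto
  moreover have "toeplitz n (xi z)" for z
    unfolding toeplitz_def xi_def by (rule exI[of _ "\<lambda>d. z powi (- d)"]) auto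
  moreover have "psd n (xi z)" if "z \<in> S1" for z
    using that by (simp add: psd_iff_qform_nonneg qform_xi less_eq_complex_def)
  ultimately show ?thesis by (simp add: pos_tensor_def in_tensor_def)
qed

lemma qform_xi_perp_vec:
  assumes "n \<ge> 2" "z \<in> S1"
  shows "qform n (xi z) (perp_vec z) = 0"
proof -
  have "(\<Sum>j<n. z ^ j * perp_vec z j) = 1 - z * cnj z"
    using assms(1) by (simp add: sum_lessThan_supported_0_1 perp_vec_def)
  then show ?thesis
    using assms(2) by (simp add: qform_xi S1_mult_cnj)
qed

lemma toeplitz_qform_perp_vec_poly:
  assumes "toeplitz n t" "n \<ge> 2" "w \<in> S1"
  shows "w * qform n t (perp_vec w) = poly [:- t 0 1, 2 * t 0 0, - t 1 0:] w"
proof -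
  obtain \<tau> where "\<And>k l. k < n \<Longrightarrow> l < n \<Longrightarrow> t k l = \<tau> (int k - int l)"
    using assms(1) unfolding toeplitz_def by blast
  then have "t 1 1 = t 0 0" using assms(2) by simp
  then show ?thesis
    using S1_mult_cnj[OF assms(3)] assms(2)
    by (simp add: qform_perp_vec algebra_simps power2_eq_square)
qed

lemma toeplitz_diag_eq_0_if_infinite_qform_perp_vec_zeros:
  assumes "toeplitz n t" "n \<ge> 2" "infinite {w \<in> S1. qform n t (perp_vec w) = 0}"
  shows "t 0 0 = 0"
proof -
  let ?p = "[:- t 0 1, 2 * t 0 0, - t 1 0:]"
  have "{w \<in> S1. qform n t (perp_vec w) = 0} \<subseteq> {w. poly ?p w = 0}"
  proof safe
    fix w assume "w \<in> S1" "qform n t (perp_vec w) = 0"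
    then show "poly ?p w = 0"
      using toeplitz_qform_perp_vec_poly[OF assms(1,2)] by (metis mult_zero_right)
  qed
  then have "?p = 0"
    using assms(3) finite_subset poly_roots_finite by blast
  then show ?thesis by simp
qed

lemma S1_islimpt: "z \<in> S1 \<Longrightarrow> z islimpt S1"
proof (rule connected_imp_perfect)
  show "connected S1" by (simp add: connected_sphere_eq)
  have "1 \<in> S1" "- 1 \<in> S1" by simp_all
  then show "S1 \<noteq> {x}" for x by force
qed

lemma continuous_on_S1_nonzero_infinite:
  fixes f :: "complex \<Rightarrow> 'a::{t1_space, zero}"
  assumes "continuous_on S1 f" "z \<in> S1" "f z \<noteq> 0"
  shows "infinite {w \<in> S1. f w \<noteq> 0}"
proof -
  have "openin (top_of_set S1) (S1 \<inter> f -` (- {0}))"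
    using continuous_openin_preimage_gen[OF assms(1)] by (simp add: open_Compl)
  then obtain e where "e > 0" "ball z e \<inter> S1 \<subseteq> S1 \<inter> f -` (- {0})"
    using assms(2,3) unfolding openin_contains_ball by blast
  then have "S1 \<inter> ball z e \<subseteq> {w \<in> S1. f w \<noteq> 0}"
    by auto
  moreover have "infinite (S1 \<inter> ball z e)"
    using S1_islimpt[OF assms(2)] \<open>e > 0\<close> islimpt_eq_infinite_ball by blast
  ultimately show ?thesis using finite_subset by blast
qed

lemma qform_nonneg_combination_eq_0D:
  assumes "finite K" "\<And>m. m \<in> K \<Longrightarrow> 0 \<le> c m \<and> psd n (t m)"
    and "qform n (\<lambda>i j. \<Sum>m\<in>K. c m * t m i j) v = 0" "m \<in> K"
  shows "c m * qform n (t m) v = 0"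
proof -
  have "\<forall>m\<in>K. 0 \<le> c m * qform n (t m) v"
    using assms(2) by (simp add: psd_iff_qform_nonneg)
  moreover have "(\<Sum>m\<in>K. c m * qform n (t m) v) = 0"
    using assms(3) by (simp add: qform_sum)
  ultimately show ?thesis
    using sum_nonneg_eq_0_iff[OF assms(1), of "\<lambda>m. c m * qform n (t m) v"] assms(4) by blast
qed

lemma pos_fun_nonneg: "pos_fun f \<Longrightarrow> z \<in> S1 \<Longrightarrow> 0 \<le> f z"
  unfolding pos_fun_def less_eq_complex_def by simp

lemma not_separable_xi:
  assumes "n \<ge> 2"
  shows "\<not> separable n xi"
proof
  assume "separable n xi"
  then obtain k :: nat and t :: "nat \<Rightarrow> cmat" and f :: "nat \<Rightarrow> complex \<Rightarrow> complex" where
    pos: "\<And>j. j < k \<Longrightarrow> pos_toeplitz n (t j) \<and> pos_fun (f j)" and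
    decomp: "\<And>z a b. z \<in> S1 \<Longrightarrow> a < n \<Longrightarrow> b < n \<Longrightarrow> xi z a b = (\<Sum>j<k. f j z * t j a b)"
    unfolding separable_def by blast
  have vanish: "f j w * qform n (t j) (perp_vec w) = 0" if "j < k" "w \<in> S1" for j w
  proof (rule qform_nonneg_combination_eq_0D)
    show "0 \<le> f i w \<and> psd n (t i)" if "i \<in> {..<k}" for i
      using pos that \<open>w \<in> S1\<close> pos_fun_nonneg unfolding pos_toeplitz_def by blast
    have "qform n (\<lambda>a b. \<Sum>i<k. f i w * t i a b) (perp_vec w) = qform n (xi w) (perp_vec w)"
      using decomp[OF \<open>w \<in> S1\<close>] by (intro qform_cong) simp
    then show "qform n (\<lambda>a b. \<Sum>i<k. f i w * t i a b) (perp_vec w) = 0"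
      using qform_xi_perp_vec[OF assms \<open>w \<in> S1\<close>] by simp
  qed (use that in auto)
  have "(\<Sum>j<k. f j 1 * t j 0 0) \<noteq> 0"
    using decomp[of 1 0 0] assms by (simp add: xi_def)
  then obtain j where "j \<in> {..<k}" "f j 1 * t j 0 0 \<noteq> 0"
    by (rule sum.not_neutral_contains_not_neutral)
  then have j: "j < k" "f j 1 \<noteq> 0" "t j 0 0 \<noteq> 0" by auto
  have "toeplitz n (t j)" "continuous_on S1 (f j)"
    using pos[OF j(1)] unfolding pos_toeplitz_def pos_fun_def by blast+
  have "{w \<in> S1. f j w \<noteq> 0} \<subseteq> {w \<in> S1. qform n (t j) (perp_vec w) = 0}"
    using vanish[OF j(1)] by auto
  moreover have "infinite {w \<in> S1. f j w \<noteq> 0}"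
    using continuous_on_S1_nonzero_infinite[OF \<open>continuous_on S1 (f j)\<close> _ j(2)] by simp
  ultimately have "infinite {w \<in> S1. qform n (t j) (perp_vec w) = 0}"
    using finite_subset by blast
  then have "t j 0 0 = 0"
    by (rule toeplitz_diag_eq_0_if_infinite_qform_perp_vec_zeros[OF \<open>toeplitz n (t j)\<close> assms])
  with j show False by simp
qed

theorem proposition7p6:
  fixes n :: nat
  assumes "n \<ge> 2"
  shows "pos_tensor n xi \<and> \<not> separable n xi"
  using pos_tensor_xi not_separable_xi[OF assms] by blast

end
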